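(* For integers $n\ge1$ and $m\ge1$, let $Q_n=\langle a,b\mid a^n=b^2=(ab)^2\rangle$ be the generalized quaternion group of order $4n$. Then $$d^\wedge_m(Q_n)=\begin{cases}\dfrac{3n+\gcd(m,n)}{4n}, & m\text{ even},\\[2mm] \dfrac{n+\gcd(m,n)+2}{4n}, & m\text{ odd}.\end{cases}$$ In particular $d^\wedge_m(Q_n)=d^\wedge_m(D_{2n})$ for all $m,n\ge1$, where $D_{2n}=\langle a,b\mid a^n=b^2=1,\ b^{-1}ab=a^{-1}\rangle$.
   Context: For a finite group $G$ (acting on itself by conjugation ${}^g x=gxg^{-1}$), the exterior square $G\wedge G$ is the group generated by symbols $x\wedge y$ ($x,y\in G$) subject to $xx'\wedge y=({}^x x'\wedge {}^x y)(x\wedge y)$, $x\wedge yy'=(x\wedge y)({}^y x\wedge {}^y y')$ and $x\wedge x=1$. The $m$-th exterior degree is $d^\wedge_m(G)=|\{(x,y)\in G\times G: x^m\wedge y=1_{G\wedge G}\}|/|G|^2$. *)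

theory Defs
  imports "HOL-Algebra.Algebra"
begin

definition conjg :: "('a, 'b) monoid_scheme \<Rightarrow> 'a \<Rightarrow> 'a \<Rightarrow> 'a" where
  "conjg G g x = g \<otimes>\<^bsub>G\<^esub> x \<otimes>\<^bsub>G\<^esub> inv\<^bsub>G\<^esub> g"

text \<open>The exterior square G \<and> G as a presented group. A word is a list of letters
  (x, y, s): s = True stands for the generator x \<and> y, s = False for its inverse.
  ext_eq G is the congruence on words generated by free cancellation and the
  defining relations; G \<and> G is the quotient monoid of words by it (a group).\<close>
inductive ext_eq :: "('a, 'b) monoid_scheme \<Rightarrow> ('a \<times> 'a \<times> bool) list \<Rightarrow> ('a \<times> 'a \<times> bool) list \<Rightarrow> bool"
  for G where
  refl: "ext_eq G w w"
| sym: "ext_eq G u w \<Longrightarrow> ext_eq G w u"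
| trans: "ext_eq G u v \<Longrightarrow> ext_eq G v w \<Longrightarrow> ext_eq G u w"
| cong: "ext_eq G u w \<Longrightarrow> ext_eq G (p @ u @ q) (p @ w @ q)"
| cancel1: "x \<in> carrier G \<Longrightarrow> y \<in> carrier G \<Longrightarrow> ext_eq G [(x, y, True), (x, y, False)] []"
| cancel2: "x \<in> carrier G \<Longrightarrow> y \<in> carrier G \<Longrightarrow> ext_eq G [(x, y, False), (x, y, True)] []"
| rel_left: "x \<in> carrier G \<Longrightarrow> x' \<in> carrier G \<Longrightarrow> y \<in> carrier G \<Longrightarrow>
     ext_eq G [(x \<otimes>\<^bsub>G\<^esub> x', y, True)] [(conjg G x x', conjg G x y, True), (x, y, True)]"
| rel_right: "x \<in> carrier G \<Longrightarrow> y \<in> carrier G \<Longrightarrow> y' \<in> carrier G \<Longrightarrow>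
     ext_eq G [(x, y \<otimes>\<^bsub>G\<^esub> y', True)] [(x, y, True), (conjg G y x, conjg G y y', True)]"
| rel_diag: "x \<in> carrier G \<Longrightarrow> ext_eq G [(x, x, True)] []"

definition wedge_trivial :: "('a, 'b) monoid_scheme \<Rightarrow> 'a \<Rightarrow> 'a \<Rightarrow> bool" where
  "wedge_trivial G x y \<longleftrightarrow> ext_eq G [(x, y, True)] []"

definition ext_degree :: "nat \<Rightarrow> ('a, 'b) monoid_scheme \<Rightarrow> real" where
  "ext_degree m G =
     real (card {(x, y). x \<in> carrier G \<and> y \<in> carrier G \<and> wedge_trivial G (x [^]\<^bsub>G\<^esub> m) y})
     / real (card (carrier G)) ^ 2"

end

theory Submission
  imports Defs "HOL-Number_Theory.Cong"
begin

text \<open>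
  The generalized quaternion group \<open>Q\<^sub>n\<close> and the dihedral group \<open>D\<^sub>2\<^sub>n\<close> are both generated by
  a rotation \<open>r\<close> and a reflection \<open>s\<close> with \<open>s r s\<inverse> = r\<inverse>\<close> and \<open>s\<^sup>2 = r\<^sup>n\<close>; the rotation has
  order \<open>N = 2n\<close> resp. \<open>N = n\<close>.

  The key fact is a criterion for the vanishing of \<open>x \<and> y\<close>.  Writing elements as \<open>r\<^sup>i s\<^sup>e\<close>, put
  \<open>twist (r\<^sup>i s\<^sup>e) (r\<^sup>j s\<^sup>f) = f\<cdot>i - e\<cdot>j\<close>.  Then \<open>x \<and> y = 1\<close> iff \<open>n\<close> divides \<open>twist x y\<close>:
  \<^item> "only if": \<open>twist\<close> satisfies the defining relations of \<open>G \<and> G\<close> modulo \<open>n\<close> (it is a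
    "wedge cocycle"), so summing it along words gives an invariant of the congruence;
  \<^item> "if": when \<open>n\<close> divides \<open>twist x y\<close>, both \<open>x\<close> and \<open>y\<close> are powers of one element, and
    wedges of powers of a single element are trivial.
  The exterior degree is then a matter of counting pairs of exponents, which reduces to
  counting residue classes and the solutions of \<open>n | i\<cdot>m\<close> in \<open>[0, N)\<close>.  The final theorem
  applies the resulting formula to both groups.
\<close>

lemmas [trans] = ext_eq.trans

lemma ext_eq_append:
  "ext_eq G u u' \<Longrightarrow> ext_eq G v v' \<Longrightarrow> ext_eq G (u @ v) (u' @ v')"
  by (metis append.left_neutral append.right_neutral ext_eq.cong ext_eq.trans)

lemma wedge_trivial_if_idempotent:
  assumes x: "x \<in> carrier G" and y: "y \<in> carrier G"
    and idem: "ext_eq G [(x, y, True)] [(x, y, True), (x, y, True)]"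
  shows "wedge_trivial G x y"
proof -
  have cancel: "ext_eq G [(x, y, False), (x, y, True)] []"
    using x y by (rule ext_eq.cancel2)
  have "ext_eq G [(x, y, True)] ([(x, y, False), (x, y, True)] @ [(x, y, True)])"
    using ext_eq_append[OF cancel ext_eq.refl, of "[(x, y, True)]"] by (simp add: ext_eq.sym)
  also have "ext_eq G \<dots> ([(x, y, False)] @ [(x, y, True)])"
    using ext_eq_append[OF ext_eq.refl idem, of "[(x, y, False)]"] by (simp add: ext_eq.sym)
  also have "ext_eq G \<dots> []"
    using cancel by simp
  finally show ?thesis unfolding wedge_trivial_def .
qed

section \<open>Wedges of powers of one element vanish\<close>

context group begin

lemma conjg_closed [simp]: "g \<in> carrier G \<Longrightarrow> x \<in> carrier G \<Longrightarrow> conjg G g x \<in> carrier G"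
  by (simp add: conjg_def)

lemma conjg_commuting: "g \<in> carrier G \<Longrightarrow> x \<in> carrier G \<Longrightarrow> g \<otimes> x = x \<otimes> g \<Longrightarrow> conjg G g x = x"
  by (simp add: conjg_def m_assoc)

lemma conjg_self_pow: "g \<in> carrier G \<Longrightarrow> conjg G g (g [^] (k::nat)) = g [^] k"
  by (rule conjg_commuting) (simp_all add: nat_pow_Suc2[symmetric] del: nat_pow_Suc)

text \<open>The relations with \<open>x = x' = 1\<close> resp. \<open>y = y' = 1\<close> show \<open>1 \<and> y = 1\<close> and \<open>x \<and> 1 = 1\<close>.\<close>

lemma wedge_one_left: "y \<in> carrier G \<Longrightarrow> wedge_trivial G \<one> y"
  using ext_eq.rel_left[of \<one> G \<one> y] by (intro wedge_trivial_if_idempotent) (simp_all add: conjg_def)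

lemma wedge_one_right: "x \<in> carrier G \<Longrightarrow> wedge_trivial G x \<one>"
  using ext_eq.rel_right[of x G \<one> \<one>] by (intro wedge_trivial_if_idempotent) (simp_all add: conjg_def)

text \<open>Since \<open>g\<close> commutes with its powers, the relations collapse to
  \<open>g \<and> g\<^sup>q\<^sup>+\<^sup>1 = (g \<and> g)(g \<and> g\<^sup>q)\<close> and \<open>g\<^sup>p\<^sup>+\<^sup>1 \<and> g\<^sup>q = (g\<^sup>p \<and> g\<^sup>q)(g \<and> g\<^sup>q)\<close>; induction does the rest.\<close>

lemma wedge_self_pow: "g \<in> carrier G \<Longrightarrow> wedge_trivial G g (g [^] (q::nat))"
proof (induction q)
  case 0
  then show ?case by (simp add: wedge_one_right)
next
  case (Suc q)
  have "g [^] Suc q = g \<otimes> g [^] q"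
    using Suc.prems by (rule nat_pow_Suc2)
  then have "ext_eq G [(g, g [^] Suc q, True)] [(g, g, True), (conjg G g g, conjg G g (g [^] q), True)]"
    using ext_eq.rel_right[of g G g "g [^] q"] Suc.prems by simp
  also have "\<dots> = [(g, g, True)] @ [(g, g [^] q, True)]"
    using conjg_self_pow[of g 1] conjg_self_pow[of g q] Suc.prems by simp
  also have "ext_eq G \<dots> ([] @ [])"
    using Suc by (intro ext_eq_append ext_eq.rel_diag) (simp_all add: wedge_trivial_def)
  finally show ?case by (simp add: wedge_trivial_def)
qed

lemma wedge_pow_pow: "g \<in> carrier G \<Longrightarrow> wedge_trivial G (g [^] (p::nat)) (g [^] (q::nat))"
proof (induction p)
  case 0
  then show ?case by (simp add: wedge_one_left)
next
  case (Suc p)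
  have "g [^] Suc p = g \<otimes> g [^] p"
    using Suc.prems by (rule nat_pow_Suc2)
  then have "ext_eq G [(g [^] Suc p, g [^] q, True)]
      [(conjg G g (g [^] p), conjg G g (g [^] q), True), (g, g [^] q, True)]"
    using ext_eq.rel_left[of g G "g [^] p" "g [^] q"] Suc.prems by simp
  also have "\<dots> = [(g [^] p, g [^] q, True)] @ [(g, g [^] q, True)]"
    using Suc.prems by (simp add: conjg_self_pow)
  also have "ext_eq G \<dots> ([] @ [])"
    using Suc wedge_self_pow by (intro ext_eq_append) (simp_all add: wedge_trivial_def)
  finally show ?case by (simp add: wedge_trivial_def)
qed

text \<open>In a finite group integer powers are natural powers, so the same holds for them.\<close>

lemma int_pow_eq_nat_pow:
  assumes "finite (carrier G)" "g \<in> carrier G"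
  shows "g [^] (p::int) = g [^] nat (p mod int (ord g))"
proof -
  have "ord g \<ge> 1" using ord_ge_1 assms .
  then have "g [^] nat (p mod int (ord g)) = g [^] (p mod int (ord g))"
    by (simp add: pow_nat)
  also have "\<dots> = g [^] p"
    using assms(2) by (subst int_pow_eq) (auto simp: mod_eq_dvd_iff[symmetric])
  finally show ?thesis by simp
qed

lemma wedge_int_pow_pow:
  "finite (carrier G) \<Longrightarrow> g \<in> carrier G \<Longrightarrow> wedge_trivial G (g [^] (p::int)) (g [^] (q::int))"
  by (simp add: int_pow_eq_nat_pow[of g p] int_pow_eq_nat_pow[of g q] wedge_pow_pow)

end

section \<open>Cocycles detect non-trivial wedges\<close>

text \<open>A function \<open>\<phi>\<close> on pairs that respects the defining relations of \<open>G \<and> G\<close> modulo \<open>k\<close>.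
  It induces a homomorphism \<open>G \<and> G \<rightarrow> \<int>/k\<close> sending \<open>x \<and> y\<close> to \<open>\<phi> x y\<close>.\<close>

definition wedge_cocycle :: "('a, 'b) monoid_scheme \<Rightarrow> int \<Rightarrow> ('a \<Rightarrow> 'a \<Rightarrow> int) \<Rightarrow> bool" where
  "wedge_cocycle G k \<phi> \<longleftrightarrow>
     (\<forall>x \<in> carrier G. [\<phi> x x = 0] (mod k)) \<and>
     (\<forall>x \<in> carrier G. \<forall>x' \<in> carrier G. \<forall>y \<in> carrier G.
        [\<phi> (x \<otimes>\<^bsub>G\<^esub> x') y = \<phi> (conjg G x x') (conjg G x y) + \<phi> x y] (mod k)) \<and>
     (\<forall>x \<in> carrier G. \<forall>y \<in> carrier G. \<forall>y' \<in> carrier G.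
        [\<phi> x (y \<otimes>\<^bsub>G\<^esub> y') = \<phi> x y + \<phi> (conjg G y x) (conjg G y y')] (mod k))"

definition word_value :: "('a, 'b) monoid_scheme \<Rightarrow> ('a \<Rightarrow> 'a \<Rightarrow> int) \<Rightarrow> ('a \<times> 'a \<times> bool) list \<Rightarrow> int" where
  "word_value G \<phi> w = sum_list (map (\<lambda>(x, y, s).
     if x \<in> carrier G \<and> y \<in> carrier G then (if s then \<phi> x y else - \<phi> x y) else 0) w)"

lemma word_value_append [simp]: "word_value G \<phi> (u @ w) = word_value G \<phi> u + word_value G \<phi> w"
  by (simp add: word_value_def)

lemma (in group) word_value_ext_eq:
  assumes \<phi>: "wedge_cocycle G k \<phi>" and "ext_eq G u w"
  shows "[word_value G \<phi> u = word_value G \<phi> w] (mod k)"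
  using assms(2)
proof induction
  case (sym u w) then show ?case by (simp add: cong_sym_eq)
next
  case (trans u v w) then show ?case using cong_trans by blast
next
  case (cong u w p q) then show ?case by (simp add: cong_add)
next
  case (rel_left x x' y)
  then show ?case using \<phi> by (simp add: wedge_cocycle_def word_value_def add.commute)
next
  case (rel_right x y y')
  then show ?case using \<phi> by (simp add: wedge_cocycle_def word_value_def)
next
  case (rel_diag x)
  then show ?case using \<phi> by (simp add: wedge_cocycle_def word_value_def)
qed (simp_all add: word_value_def)

lemma (in group) wedge_trivial_cocycle_dvd:
  assumes "wedge_cocycle G k \<phi>" "x \<in> carrier G" "y \<in> carrier G" "wedge_trivial G x y"
  shows "k dvd \<phi> x y"
  using word_value_ext_eq[OF assms(1) assms(4)[unfolded wedge_trivial_def]] assms(2,3)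
  by (simp add: word_value_def cong_0_iff)

section \<open>Counting residues\<close>

lemma card_residue_class:
  fixes d M a :: int
  assumes d: "0 < d" and dM: "d dvd M" and M: "0 \<le> M"
  shows "card {j \<in> {0..<M}. d dvd (j - a)} = nat (M div d)"
proof -
  obtain K where K: "M = d * K" using dM by (rule dvdE)
  have K0: "0 \<le> K" using K d M by (simp add: zero_le_mult_iff)
  define progression where "progression t = a mod d + d * t" for t
  have "{j \<in> {0..<M}. d dvd (j - a)} = progression ` {0..<K}"
  proof (intro Set.set_eqI iffI)
    fix j assume j: "j \<in> {j \<in> {0..<M}. d dvd (j - a)}"
    then have "j mod d = a mod d" by (simp add: mod_eq_dvd_iff)
    then have "j = progression (j div d)"
      unfolding progression_def by (metis add.commute div_mult_mod_eq mult.commute)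
    moreover have "0 \<le> j div d" using j d by (simp add: pos_imp_zdiv_nonneg_iff)
    moreover have "j div d < K"
    proof -
      have "j div d * d \<le> j" using d by (simp add: minus_mod_eq_div_mult[symmetric])
      then have "j div d * d < K * d" using j K by (simp add: mult.commute)
      then show ?thesis using d by simp
    qed
    ultimately show "j \<in> progression ` {0..<K}" by auto
  next
    fix j assume "j \<in> progression ` {0..<K}"
    then obtain t where t: "0 \<le> t" "t < K" and j: "j = a mod d + d * t"
      by (auto simp: progression_def)
    have "d * (t + 1) \<le> d * K" using t d by (simp add: mult_left_mono)
    then have "d * t + d \<le> d * K" by (simp add: distrib_left)
    moreover have "0 \<le> a mod d" "a mod d < d" "0 \<le> d * t" using d t by simp_all
    ultimately have "0 \<le> j" "j < M" using j K by linarith+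
    moreover have "j - a = d * (t - a div d)"
      using j by (simp add: algebra_simps minus_mod_eq_mult_div[symmetric])
    ultimately show "j \<in> {j \<in> {0..<M}. d dvd (j - a)}" by simp
  qed
  moreover have "inj_on progression {0..<K}" using d by (intro inj_onI) (simp add: progression_def)
  ultimately show ?thesis using K d by (simp add: card_image)
qed

text \<open>Solving \<open>n | i\<cdot>m\<close> for \<open>i\<close>: divide out \<open>gcd m n\<close> and use coprimality.\<close>

lemma dvd_mult_iff_dvd_div_gcd:
  fixes n m i :: int
  assumes n: "0 < n"
  shows "n dvd i * m \<longleftrightarrow> n div gcd m n dvd i"
proof -
  define g where "g = gcd m n"
  have g: "0 < g" using n by (simp add: g_def)
  obtain n' where n': "n = g * n'" unfolding g_def by (metis gcd_dvd2 dvdE)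
  obtain m' where m': "m = g * m'" unfolding g_def by (metis gcd_dvd1 dvdE)
  have "coprime (n div g) (m div g)"
    unfolding g_def using n by (metis div_gcd_coprime gcd.commute less_irrefl)
  then have coprime: "coprime n' m'" using n' m' g by simp
  have "n dvd i * m \<longleftrightarrow> g * n' dvd g * (i * m')" using n' m' by (simp add: ac_simps)
  also have "\<dots> \<longleftrightarrow> n' dvd i * m'" using g by simp
  also have "\<dots> \<longleftrightarrow> n' dvd i" using coprime by (simp add: coprime_dvd_mult_left_iff)
  also have "n' = n div g" using n' g by simp
  finally show ?thesis unfolding g_def .
qed

lemma card_multiples_gcd:
  fixes M n m :: int
  assumes n: "0 < n" and nM: "n dvd M" and M: "0 \<le> M"
  shows "card {i \<in> {0..<M}. n dvd i * m} = nat (M div (n div gcd m n))"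
proof -
  have "0 < n div gcd m n" using n
    by (simp add: pos_imp_zdiv_pos_iff zdvd_imp_le)
  moreover have "n div gcd m n dvd M"
    using nM by (metis dvd_div_mult_self dvd_trans dvd_triv_left gcd_dvd2)
  moreover have "{i \<in> {0..<M}. n dvd i * m} = {j \<in> {0..<M}. n div gcd m n dvd (j - 0)}"
    using dvd_mult_iff_dvd_div_gcd[OF n] by simp
  ultimately show ?thesis using card_residue_class[of "n div gcd m n" M 0] M by simp
qed

section \<open>Groups of dihedral type\<close>

context group begin

lemma reflection_pow_nat:
  assumes r: "r \<in> carrier G" and s: "s \<in> carrier G" and sr: "s \<otimes> r = inv r \<otimes> s"
  shows "s \<otimes> r [^] (k::nat) = inv (r [^] k) \<otimes> s"
proof (induction k)
  case 0
  then show ?case using s by simp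
next
  case (Suc k)
  have "s \<otimes> r [^] Suc k = (s \<otimes> r [^] k) \<otimes> r" using r s by (simp add: m_assoc)
  also have "\<dots> = inv (r [^] k) \<otimes> (s \<otimes> r)" using Suc r s by (simp add: m_assoc)
  also have "\<dots> = (inv (r [^] k) \<otimes> inv r) \<otimes> s" using sr r s by (simp add: m_assoc)
  also have "inv (r [^] k) \<otimes> inv r = inv (r [^] Suc k)"
    using r by (simp add: inv_mult_group[symmetric] nat_pow_Suc2[symmetric] del: nat_pow_Suc)
  finally show ?case .
qed

lemma reflection_pow:
  assumes r: "r \<in> carrier G" and s: "s \<in> carrier G" and sr: "s \<otimes> r = inv r \<otimes> s"
  shows "s \<otimes> r [^] (i::int) = r [^] (- i) \<otimes> s"
proof (cases "0 \<le> i")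
  case True
  then show ?thesis
    using reflection_pow_nat[OF assms, of "nat i"] r by (simp add: pow_nat int_pow_neg)
next
  case False
  define k where "k = nat (- i)"
  have i: "i = - int k" using False k_def by simp
  have "r [^] k \<otimes> s \<otimes> r [^] k = s"
    using reflection_pow_nat[OF assms, of k] r s by (simp add: m_assoc) (simp add: m_assoc[symmetric])
  then have "s \<otimes> inv (r [^] k) = r [^] k \<otimes> s"
    using r s by (metis inv_solve_right' m_closed nat_pow_closed)
  then show ?thesis using r s by (simp add: i int_pow_neg_int int_pow_int)
qed

end

text \<open>For \<open>N = n\<close> this is the dihedral group
  \<open>D\<^sub>2\<^sub>n\<close>, for \<open>N = 2n\<close> the generalized quaternion group \<open>Q\<^sub>n\<close>.\<close>

locale dihedral_type = group G for G (structure) +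
  fixes r s :: 'a and N n :: nat
  assumes r_closed [simp]: "r \<in> carrier G" and s_closed [simp]: "s \<in> carrier G"
    and generated: "carrier G = generate G {r, s}"
    and r_order: "r [^] N = \<one>"
    and r_pow_n: "r [^] n = s [^] (2::nat)"
    and s_r: "s \<otimes> r = inv r \<otimes> s"
    and card_carrier: "card (carrier G) = 2 * N"
    and N_cases: "N = n \<or> N = 2 * n"
    and n_pos: "1 \<le> n"
begin

lemma N_pos: "1 \<le> N" using N_cases n_pos by auto

lemma n_dvd_N: "int n dvd int N" using N_cases by auto

lemma finite_carrier: "finite (carrier G)"
  using N_pos by (intro card_ge_0_finite) (simp add: card_carrier)

text \<open>Every element is \<open>r\<^sup>i s\<^sup>e\<close>; the exponents multiply as in a semidirect product twisted
  by \<open>s\<^sup>2 = r\<^sup>n\<close>.\<close>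

definition elem :: "int \<Rightarrow> bool \<Rightarrow> 'a" where
  "elem i e = r [^] i \<otimes> (if e then s else \<one>)"

lemma elem_closed [simp]: "elem i e \<in> carrier G" by (simp add: elem_def)

lemma elem_rotation: "elem i False = r [^] i" by (simp add: elem_def)

lemma s_square: "s \<otimes> s = r [^] int n"
  using r_pow_n by (simp add: int_pow_int numeral_2_eq_2)

lemma elem_mult:
  "elem i e \<otimes> elem j f = elem (i + (if e then - j else j) + (if e \<and> f then int n else 0)) (e \<noteq> f)"
proof (cases e)
  case False
  then show ?thesis by (cases f) (simp_all add: elem_def int_pow_mult m_assoc)
next
  case True
  have "elem i e \<otimes> elem j f = r [^] i \<otimes> (s \<otimes> r [^] j) \<otimes> (if f then s else \<one>)"
    using True by (simp add: elem_def m_assoc)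
  also have "\<dots> = r [^] (i - j) \<otimes> (s \<otimes> (if f then s else \<one>))"
    using int_pow_mult[of r i "- j"] by (simp add: reflection_pow[OF r_closed s_closed s_r] m_assoc)
  finally show ?thesis
    using True by (cases f) (simp_all add: elem_def int_pow_mult m_assoc s_square)
qed

lemma r_pow_mod: "r [^] (i::int) = r [^] (i mod int N)"
proof -
  have "int (ord r) dvd int N" using pow_eq_id[of r N] r_order by simp
  moreover have "int N dvd (i mod int N - i)" by (simp add: mod_eq_dvd_iff[symmetric])
  ultimately show ?thesis using int_pow_eq[of r i "i mod int N"] by (auto intro: dvd_trans)
qed

lemma elem_mod: "elem i e = elem (i mod int N) e"
  by (simp add: elem_def r_pow_mod[of i])

lemma elem_inv: "inv (elem i e) = elem (if e then i + int n else - i) e"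
proof (rule inv_equality)
  have "2 * int n mod int N = 0" using N_cases by auto
  then have "elem (if e then 2 * int n else 0) False = \<one>"
    by (simp add: elem_def r_pow_mod[of "2 * int n"])
  then show "elem (if e then i + int n else - i) e \<otimes> elem i e = \<one>"
    by (cases e) (simp_all add: elem_mult)
qed simp_all

text \<open>The exponents \<open>0 \<le> i < N\<close>, \<open>e \<in> {0, 1}\<close> parametrize the group bijectively: the
  normal form map onto \<open>G\<close> is surjective since \<open>r, s\<close> generate, hence injective by counting.\<close>

definition coord_range :: "(int \<times> bool) set" where
  "coord_range = {0..<int N} \<times> UNIV"

lemma finite_coord_range: "finite coord_range" by (simp add: coord_range_def)

lemma card_coord_range: "card coord_range = 2 * N"
  by (simp add: coord_range_def card_cartesian_product)

lemma elem_in_range [simp]: "elem i e \<in> range (case_prod elem)"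
  by (rule image_eqI[of _ _ "(i, e)"]) simp_all

lemma generate_subset_elems: "generate G {r, s} \<subseteq> range (case_prod elem)"
proof
  fix x assume "x \<in> generate G {r, s}"
  then show "x \<in> range (case_prod elem)"
  proof induction
    case one
    show ?case by (rule image_eqI[of _ _ "(0, False)"]) (simp_all add: elem_def)
  next
    case (incl h)
    then have "h = elem 1 False \<or> h = elem 0 True" by (auto simp: elem_def)
    then show ?case by auto
  next
    case (inv h)
    then have "inv h = elem (- 1) False \<or> inv h = elem (int n) True"
      using elem_inv[of 0 True] by (auto simp: elem_def int_pow_neg)
    then show ?case by auto
  next
    case (eng h1 h2)
    then obtain i e j f where "h1 = elem i e" "h2 = elem j f" by auto
    then show ?case by (simp add: elem_mult)
  qed
qed

lemma carrier_eq_elems: "carrier G = case_prod elem ` coord_range"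
proof
  show "carrier G \<subseteq> case_prod elem ` coord_range"
  proof
    fix x assume "x \<in> carrier G"
    then obtain i e where "x = elem i e" using generated generate_subset_elems by auto
    then show "x \<in> case_prod elem ` coord_range"
      using N_pos elem_mod[of i e] by (intro image_eqI[of _ _ "(i mod int N, e)"]) (simp_all add: coord_range_def)
  qed
qed auto

lemma elem_cases:
  assumes "x \<in> carrier G"
  obtains i e where "x = elem i e"
  using assms carrier_eq_elems by auto

lemma inj_on_elem: "inj_on (case_prod elem) coord_range"
  using carrier_eq_elems card_carrier card_coord_range
  by (intro eq_card_imp_inj_on finite_coord_range) simp

definition coords :: "'a \<Rightarrow> int \<times> bool" where
  "coords = inv_into coord_range (case_prod elem)"

lemma coords_elem: "coords (elem i e) = (i mod int N, e)"
  unfolding coords_def using N_pos elem_mod[of i e]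
  by (intro inv_into_f_eq[OF inj_on_elem]) (simp_all add: coord_range_def)

definition twist_coord :: "int \<Rightarrow> bool \<Rightarrow> int \<Rightarrow> bool \<Rightarrow> int" where
  "twist_coord i e j f = (if f then i else 0) - (if e then j else 0)"

definition twist :: "'a \<Rightarrow> 'a \<Rightarrow> int" where
  "twist x y = (case (coords x, coords y) of ((i, e), (j, f)) \<Rightarrow> twist_coord i e j f)"

text \<open>Modulo \<open>n\<close>, the twist may be computed from unreduced exponents, since \<open>n | N\<close>.\<close>

lemma twist_elem: "[twist (elem i e) (elem j f) = twist_coord i e j f] (mod int n)"
proof -
  have "[i mod int N = i] (mod int n)" "[j mod int N = j] (mod int n)"
    by (rule cong_dvd_modulus[OF _ n_dvd_N], simp)+
  then show ?thesis
    by (auto simp: twist_def coords_elem twist_coord_def cong_minus_minus_iff intro: cong_diff)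
qed

lemma twist_cocycle: "wedge_cocycle G (int n) twist"
proof -
  have transfer: "[a = b + c] (mod int n)"
    if "[a = a'] (mod int n)" "[b = b'] (mod int n)" "[c = c'] (mod int n)" "[a' = b' + c'] (mod int n)"
    for a a' b b' c c' :: int
    using that by (metis cong_add cong_sym cong_trans)
  have diag: "[twist x x = 0] (mod int n)" for x
    by (simp add: twist_def twist_coord_def split: prod.split)
  have left: "[twist (x \<otimes> x') y = twist (conjg G x x') (conjg G x y) + twist x y] (mod int n)"
    if x: "x \<in> carrier G" and x': "x' \<in> carrier G" and y: "y \<in> carrier G" for x x' y
  proof -
    obtain i e where x_eq: "x = elem i e" using x by (rule elem_cases)
    obtain i' e' where x'_eq: "x' = elem i' e'" using x' by (rule elem_cases)
    obtain j f where y_eq: "y = elem j f" using y by (rule elem_cases)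
    show ?thesis unfolding x_eq x'_eq y_eq conjg_def elem_mult elem_inv
      by (intro transfer[OF twist_elem twist_elem twist_elem])
        (cases e; cases e'; cases f; simp add: twist_coord_def cong_iff_dvd_diff algebra_simps)
  qed
  have right: "[twist x (y \<otimes> y') = twist x y + twist (conjg G y x) (conjg G y y')] (mod int n)"
    if x: "x \<in> carrier G" and y: "y \<in> carrier G" and y': "y' \<in> carrier G" for x y y'
  proof -
    obtain i e where x_eq: "x = elem i e" using x by (rule elem_cases)
    obtain j f where y_eq: "y = elem j f" using y by (rule elem_cases)
    obtain j' f' where y'_eq: "y' = elem j' f'" using y' by (rule elem_cases)
    show ?thesis unfolding x_eq y_eq y'_eq conjg_def elem_mult elem_inv
      by (intro transfer[OF twist_elem twist_elem twist_elem])
        (cases e; cases f; cases f'; simp add: twist_coord_def cong_iff_dvd_diff algebra_simps)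
  qed
  show ?thesis using diag left right by (simp add: wedge_cocycle_def)
qed

lemma reflection_even_pow: "elem i True [^] (2 * q) = elem (int n * q) False"
proof -
  have "elem i True [^] (2::int) = elem i True \<otimes> elem i True"
    using int_pow_int[of G "elem i True" 2] by (simp add: numeral_2_eq_2)
  also have "\<dots> = r [^] int n" by (simp add: elem_mult elem_rotation)
  finally have "elem i True [^] (2 * q) = (r [^] int n) [^] q"
    by (simp add: int_pow_pow[symmetric])
  then show ?thesis by (simp add: int_pow_pow elem_rotation)
qed

lemma reflection_odd_pow: "elem i True [^] (2 * q + 1) = elem (int n * q + i) True"
  by (simp add: int_pow_mult reflection_even_pow elem_mult)

text \<open>If \<open>n\<close> divides the twist, the two elements are powers of a common element
  (of \<open>r\<close>, or of the reflection among them), so their wedge vanishes.\<close>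

lemma dvd_twist_imp_wedge_trivial:
  assumes x: "x \<in> carrier G" and y: "y \<in> carrier G" and dvd: "int n dvd twist x y"
  shows "wedge_trivial G x y"
proof -
  obtain i e where x_eq: "x = elem i e" using x by (rule elem_cases)
  obtain j f where y_eq: "y = elem j f" using y by (rule elem_cases)
  have "[twist_coord i e j f = 0] (mod int n)"
    using twist_elem[of i e j f] dvd x_eq y_eq by (metis cong_0_iff cong_sym cong_trans)
  then have coord_dvd: "int n dvd twist_coord i e j f" by (simp add: cong_0_iff)
  have cyclic: "wedge_trivial G (g [^] (p::int)) (g [^] (q::int))" if "g \<in> carrier G" for g p q
    using wedge_int_pow_pow[OF finite_carrier that] .
  show ?thesis unfolding x_eq y_eq
  proof (cases e; cases f)
    assume "\<not> e" "\<not> f"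
    then show "wedge_trivial G (elem i e) (elem j f)"
      using cyclic[of r i j] by (simp add: elem_rotation)
  next
    assume e: "\<not> e" and f: f
    then obtain q where "i = int n * q" using coord_dvd by (auto simp: twist_coord_def elim: dvdE)
    then have "elem i e = elem j True [^] (2 * q)" "elem j f = elem j True [^] (1::int)"
      using e f by (simp_all add: reflection_even_pow)
    then show "wedge_trivial G (elem i e) (elem j f)" using cyclic[of "elem j True" "2 * q" 1] by simp
  next
    assume e: e and f: "\<not> f"
    then obtain q where "j = int n * q" using coord_dvd by (auto simp: twist_coord_def elim: dvdE)
    then have "elem j f = elem i True [^] (2 * q)" "elem i e = elem i True [^] (1::int)"
      using e f by (simp_all add: reflection_even_pow)
    then show "wedge_trivial G (elem i e) (elem j f)" using cyclic[of "elem i True" 1 "2 * q"] by simp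
  next
    assume e: e and f: f
    then obtain q where "i - j = int n * q" using coord_dvd by (auto simp: twist_coord_def elim: dvdE)
    then have "j = int n * (- q) + i" by (simp add: algebra_simps)
    then have "elem j f = elem i True [^] (2 * (- q) + 1)" "elem i e = elem i True [^] (1::int)"
      using e f by (simp_all only: reflection_odd_pow) simp_all
    then show "wedge_trivial G (elem i e) (elem j f)" using cyclic[of "elem i True" 1 "2 * (- q) + 1"] by simp
  qed
qed

theorem wedge_trivial_iff_dvd_twist:
  "x \<in> carrier G \<Longrightarrow> y \<in> carrier G \<Longrightarrow> wedge_trivial G x y \<longleftrightarrow> int n dvd twist x y"
  using wedge_trivial_cocycle_dvd[OF twist_cocycle] dvd_twist_imp_wedge_trivial by blast

lemma elem_pow: "elem i e [^] (m::nat) =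
    (if \<not> e then elem (i * int m) False
     else if even m then elem (int n * int (m div 2)) False
     else elem (int n * int (m div 2) + i) True)"
proof (cases e)
  case False
  have "elem i e [^] m = (r [^] i) [^] int m" using False by (simp add: elem_rotation int_pow_int)
  then show ?thesis using False by (simp add: int_pow_pow elem_rotation)
next
  case True
  have m: "int m = 2 * int (m div 2) + (if even m then 0 else 1)" by presburger
  have "elem i e [^] m = elem i True [^] int m" using True by (simp add: int_pow_int)
  also have "\<dots> = (if even m then elem (int n * int (m div 2)) False
      else elem (int n * int (m div 2) + i) True)"
    by (subst m) (simp add: reflection_even_pow reflection_odd_pow)
  finally show ?thesis using True by simp
qed

definition power_twist :: "nat \<Rightarrow> int \<Rightarrow> bool \<Rightarrow> int \<Rightarrow> bool \<Rightarrow> int" where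
  "power_twist m i e j f =
     (if \<not> e then (if f then i * int m else 0) else if even m then 0 else twist_coord i True j f)"

lemma twist_pow_elem: "[twist (elem i e [^] m) (elem j f) = power_twist m i e j f] (mod int n)"
proof -
  have "[twist_coord A B j f = power_twist m i e j f] (mod int n)"
    if "elem i e [^] m = elem A B" and "B = (e \<and> odd m)"
      and "A = (if \<not> e then i * int m else if even m then int n * int (m div 2)
                else int n * int (m div 2) + i)" for A B
    using that by (cases e; cases f; cases "even m")
      (simp_all add: power_twist_def twist_coord_def cong_iff_dvd_diff)
  then show ?thesis using twist_elem elem_pow[of i e m] by (metis (no_types, lifting) cong_trans)
qed

definition commuting_pairs :: "nat \<Rightarrow> ((int \<times> bool) \<times> (int \<times> bool)) set" where
  "commuting_pairs m = {((i, e), (j, f)) \<in> coord_range \<times> coord_range. int n dvd power_twist m i e j f}"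

lemma card_wedge_pairs:
  "card {(x, y). x \<in> carrier G \<and> y \<in> carrier G \<and> wedge_trivial G (x [^] m) y} = card (commuting_pairs m)"
proof -
  let ?elem2 = "map_prod (case_prod elem) (case_prod elem)"
  have trivial_iff: "wedge_trivial G (elem i e [^] m) (elem j f) \<longleftrightarrow> int n dvd power_twist m i e j f"
    for i e j f
    using wedge_trivial_iff_dvd_twist[of "elem i e [^] m" "elem j f"] twist_pow_elem[of i e m j f]
    by (simp add: cong_dvd_iff)
  have "{(x, y). x \<in> carrier G \<and> y \<in> carrier G \<and> wedge_trivial G (x [^] m) y} = ?elem2 ` commuting_pairs m"
  proof (intro equalityI subsetI)
    fix z assume "z \<in> {(x, y). x \<in> carrier G \<and> y \<in> carrier G \<and> wedge_trivial G (x [^] m) y}"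
    then obtain i e j f where "(i, e) \<in> coord_range" "(j, f) \<in> coord_range"
      and "z = (elem i e, elem j f)" and "wedge_trivial G (elem i e [^] m) (elem j f)"
      by (auto simp: carrier_eq_elems)
    then show "z \<in> ?elem2 ` commuting_pairs m"
      by (intro image_eqI[of _ _ "((i, e), (j, f))"]) (simp_all add: commuting_pairs_def trivial_iff)
  qed (auto simp: commuting_pairs_def trivial_iff)
  moreover have "inj_on ?elem2 (commuting_pairs m)"
    by (rule inj_on_subset[OF map_prod_inj_on[OF inj_on_elem inj_on_elem]])
      (auto simp: commuting_pairs_def)
  ultimately show ?thesis by (simp add: card_image)
qed

lemma card_coord_filter:
  "card {q \<in> coord_range. P q} =
     card {j \<in> {0..<int N}. P (j, False)} + card {j \<in> {0..<int N}. P (j, True)}"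
proof -
  let ?row = "\<lambda>b. {j \<in> {0..<int N}. P (j, b)}"
  have "{q \<in> coord_range. P q} = (\<lambda>j. (j, False)) ` ?row False \<union> (\<lambda>j. (j, True)) ` ?row True"
    by (auto simp: coord_range_def image_iff) (metis (full_types))
  moreover have "finite (?row b)" for b
    by (rule finite_subset[of _ "{0..<int N}"]) auto
  then have "card ((\<lambda>j. (j, False)) ` ?row False \<union> (\<lambda>j. (j, True)) ` ?row True) =
      card ((\<lambda>j. (j, False)) ` ?row False) + card ((\<lambda>j. (j, True)) ` ?row True)"
    by (intro card_Un_disjoint) auto
  ultimately show ?thesis by (simp add: card_image inj_on_def)
qed

lemma sum_coord_range:
  "(\<Sum>p \<in> coord_range. F p) = (\<Sum>i \<in> {0..<int N}. F (i, False)) + (\<Sum>i \<in> {0..<int N}. F (i, True))"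
proof -
  have "(\<Sum>p \<in> coord_range. F p) = (\<Sum>i \<in> {0..<int N}. \<Sum>b \<in> UNIV. F (i, b))"
    unfolding coord_range_def by (simp add: sum.cartesian_product)
  then show ?thesis by (simp add: UNIV_bool add.commute sum.distrib)
qed

lemma card_residues: "card {j \<in> {0..<int N}. int n dvd (j - a)} = N div n"
  using card_residue_class[of "int n" "int N" a] n_pos n_dvd_N by (simp flip: zdiv_int)

lemma card_multiples: "card {i \<in> {0..<int N}. int n dvd i * int m} = N div n * gcd m n"
proof -
  define g k where "g = gcd m n" and "k = N div n"
  obtain d where d: "n = g * d" unfolding g_def by (metis gcd_dvd2 dvdE)
  have pos: "0 < g" "0 < d" using n_pos d by (auto simp: g_def[symmetric] intro: gr0I)
  have N: "N = k * g * d" using N_cases d pos by (auto simp: k_def)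
  have gcd_int: "gcd (int m) (int n) = int g" by (simp add: g_def)
  have "card {i \<in> {0..<int N}. int n dvd i * int m} = nat (int N div (int n div gcd (int m) (int n)))"
    using card_multiples_gcd[of "int n" "int N" "int m"] n_pos n_dvd_N by simp
  also have "int n div gcd (int m) (int n) = int d" unfolding gcd_int using d pos by simp
  also have "nat (int N div int d) = k * g" using N pos by (simp add: nat_mult_distrib)
  finally show ?thesis by (simp add: g_def k_def)
qed

text \<open>The simplifier's normal form of the size of \<open>[0, N)\<close>.\<close>

lemma card_int_range [simp]: "card {j. 0 \<le> j \<and> j < int N} = N"
proof -
  have "{j. 0 \<le> j \<and> j < int N} = {0..<int N}" by auto
  then show ?thesis by simp
qed

text \<open>For a rotation \<open>x = r\<^sup>i\<close>: every rotation \<open>y\<close> works, a reflection iff \<open>n | i\<cdot>m\<close>.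
  For a reflection \<open>x\<close> and even \<open>m\<close>, \<open>x\<^sup>m\<close> is central and every \<open>y\<close> works; for odd \<open>m\<close>,
  \<open>y\<close> must lie in one residue class modulo \<open>n\<close> on each coset of \<open>\<langle>r\<rangle>\<close>.\<close>

lemma card_rotation_row:
  "card {q \<in> coord_range. int n dvd power_twist m i False (fst q) (snd q)} =
     N + (if int n dvd i * int m then N else 0)"
  unfolding card_coord_filter by (simp add: power_twist_def)

lemma card_reflection_row:
  "card {q \<in> coord_range. int n dvd power_twist m i True (fst q) (snd q)} =
     (if even m then 2 * N else 2 * (N div n))"
proof (cases "even m")
  case True
  then show ?thesis unfolding card_coord_filter by (simp add: power_twist_def)
next
  case False
  have "{j \<in> {0..<int N}. int n dvd power_twist m i True j False} = {j \<in> {0..<int N}. int n dvd (j - 0)}"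
    using False by (simp add: power_twist_def twist_coord_def)
  moreover have "{j \<in> {0..<int N}. int n dvd power_twist m i True j True} = {j \<in> {0..<int N}. int n dvd (j - i)}"
    using False by (auto simp: power_twist_def twist_coord_def dvd_diff_commute)
  ultimately show ?thesis
    unfolding card_coord_filter using False card_residues[of 0] card_residues[of i] by simp
qed

lemma card_commuting_pairs:
  "card (commuting_pairs m) =
     N * N + N * (N div n * gcd m n) + N * (if even m then 2 * N else 2 * (N div n))"
proof -
  have "commuting_pairs m =
      Sigma coord_range (\<lambda>p. {q \<in> coord_range. int n dvd power_twist m (fst p) (snd p) (fst q) (snd q)})"
    by (auto simp: commuting_pairs_def)
  then have "card (commuting_pairs m) =
      (\<Sum>p \<in> coord_range. card {q \<in> coord_range. int n dvd power_twist m (fst p) (snd p) (fst q) (snd q)})"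
    by (simp add: card_SigmaI finite_coord_range)
  also have "\<dots> = (\<Sum>i \<in> {0..<int N}. N + (if int n dvd i * int m then N else 0)) +
      (\<Sum>i \<in> {0..<int N}. if even m then 2 * N else 2 * (N div n))"
    unfolding sum_coord_range fst_conv snd_conv card_rotation_row card_reflection_row ..
  also have "(\<Sum>i \<in> {0..<int N}. if int n dvd i * int m then N else 0) = N * (N div n * gcd m n)"
    using sum.inter_filter[of "{0..<int N}" "\<lambda>_. N" "\<lambda>i. int n dvd i * int m", symmetric]
      card_multiples[of m]
    by simp
  ultimately show ?thesis by (simp add: sum.distrib)
qed

theorem ext_degree_formula:
  "ext_degree m G =
     (if even m then (3 * real n + real (gcd m n)) / (4 * real n)
      else (real n + real (gcd m n) + 2) / (4 * real n))"
proof -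
  define k where "k = N div n"
  have N: "N = k * n" and pos: "0 < k" "0 < n" using N_cases n_pos by (auto simp: k_def)
  have "ext_degree m G = real (card (commuting_pairs m)) / real (2 * N) ^ 2"
    unfolding ext_degree_def card_carrier card_wedge_pairs ..
  also have "card (commuting_pairs m) = N * N + N * (k * gcd m n) + N * (if even m then 2 * N else 2 * k)"
    unfolding card_commuting_pairs k_def ..
  also have "real (N * N + N * (k * gcd m n) + N * (if even m then 2 * N else 2 * k)) / real (2 * N) ^ 2 =
      (if even m then (3 * real n + real (gcd m n)) / (4 * real n)
       else (real n + real (gcd m n) + 2) / (4 * real n))"
    unfolding N using pos by (cases "even m") (simp_all add: field_simps power2_eq_square)
  finally show ?thesis .
qed

end

text \<open>From \<open>b\<^sup>2 = (ab)\<^sup>2\<close> we get \<open>b a = a\<inverse> b\<close>; conjugating \<open>a\<^sup>n = b\<^sup>2\<close> by \<open>b\<close> then gives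
  \<open>b\<^sup>2 = b\<^sup>-\<^sup>2\<close>, so \<open>a\<^sup>2\<^sup>n = 1\<close>.\<close>

lemma generalized_quaternion_is_dihedral_type:
  fixes Q :: "('a, 'b) monoid_scheme" and n :: nat and a b :: 'a
  assumes "n \<ge> 1" and "group Q" and a: "a \<in> carrier Q" and b: "b \<in> carrier Q"
    and "carrier Q = generate Q {a, b}"
    and an: "a [^]\<^bsub>Q\<^esub> n = b [^]\<^bsub>Q\<^esub> (2::nat)"
    and ab: "b [^]\<^bsub>Q\<^esub> (2::nat) = (a \<otimes>\<^bsub>Q\<^esub> b) [^]\<^bsub>Q\<^esub> (2::nat)"
    and "card (carrier Q) = 4 * n"
  shows "dihedral_type Q a b (2 * n) n"
proof -
  interpret group Q by fact
  have "b \<otimes>\<^bsub>Q\<^esub> b = a \<otimes>\<^bsub>Q\<^esub> b \<otimes>\<^bsub>Q\<^esub> a \<otimes>\<^bsub>Q\<^esub> b"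
    using ab a b by (simp add: numeral_2_eq_2 m_assoc)
  then have "b = a \<otimes>\<^bsub>Q\<^esub> b \<otimes>\<^bsub>Q\<^esub> a" using a b by simp
  then have ba: "b \<otimes>\<^bsub>Q\<^esub> a = inv\<^bsub>Q\<^esub> a \<otimes>\<^bsub>Q\<^esub> b"
    using a b by (simp add: inv_solve_left m_assoc)
  have bb: "a [^]\<^bsub>Q\<^esub> n = b \<otimes>\<^bsub>Q\<^esub> b" using an b by (simp add: numeral_2_eq_2)
  have "b \<otimes>\<^bsub>Q\<^esub> a [^]\<^bsub>Q\<^esub> n = inv\<^bsub>Q\<^esub> (a [^]\<^bsub>Q\<^esub> n) \<otimes>\<^bsub>Q\<^esub> b"
    by (rule reflection_pow_nat[OF a b ba])
  then have "b \<otimes>\<^bsub>Q\<^esub> b \<otimes>\<^bsub>Q\<^esub> b = inv\<^bsub>Q\<^esub> (b \<otimes>\<^bsub>Q\<^esub> b) \<otimes>\<^bsub>Q\<^esub> b"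
    using bb b by (simp add: m_assoc)
  then have "b \<otimes>\<^bsub>Q\<^esub> b = inv\<^bsub>Q\<^esub> (b \<otimes>\<^bsub>Q\<^esub> b)"
    using b by simp
  then have "a [^]\<^bsub>Q\<^esub> n \<otimes>\<^bsub>Q\<^esub> a [^]\<^bsub>Q\<^esub> n = \<one>\<^bsub>Q\<^esub>"
    using bb b by (metis m_closed r_inv)
  then have "a [^]\<^bsub>Q\<^esub> (2 * n) = \<one>\<^bsub>Q\<^esub>"
    using a by (simp add: mult_2 nat_pow_mult)
  then show ?thesis
    by unfold_locales (use assms ba in auto)
qed

text \<open>For the dihedral group, \<open>d\<inverse> = d\<close> turns the relation into \<open>d c = c\<inverse> d\<close>.\<close>

lemma dihedral_is_dihedral_type:
  fixes D :: "('c, 'd) monoid_scheme" and n :: nat and c d :: 'c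
  assumes "n \<ge> 1" and "group D" and c: "c \<in> carrier D" and d: "d \<in> carrier D"
    and "carrier D = generate D {c, d}"
    and "c [^]\<^bsub>D\<^esub> n = \<one>\<^bsub>D\<^esub>"
    and dd: "d [^]\<^bsub>D\<^esub> (2::nat) = \<one>\<^bsub>D\<^esub>"
    and dcd: "inv\<^bsub>D\<^esub> d \<otimes>\<^bsub>D\<^esub> c \<otimes>\<^bsub>D\<^esub> d = inv\<^bsub>D\<^esub> c"
    and "card (carrier D) = 2 * n"
  shows "dihedral_type D c d n n"
proof -
  interpret group D by fact
  have "d \<otimes>\<^bsub>D\<^esub> d = \<one>\<^bsub>D\<^esub>" using dd d by (simp add: numeral_2_eq_2)
  then have "inv\<^bsub>D\<^esub> d = d" using d by (simp add: inv_equality)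
  then have "d \<otimes>\<^bsub>D\<^esub> c \<otimes>\<^bsub>D\<^esub> d \<otimes>\<^bsub>D\<^esub> d = inv\<^bsub>D\<^esub> c \<otimes>\<^bsub>D\<^esub> d" using dcd by simp
  then have "d \<otimes>\<^bsub>D\<^esub> c = inv\<^bsub>D\<^esub> c \<otimes>\<^bsub>D\<^esub> d"
    using c d \<open>d \<otimes>\<^bsub>D\<^esub> d = \<one>\<^bsub>D\<^esub>\<close> by (simp add: m_assoc)
  then show ?thesis
    by unfold_locales (use assms in auto)
qed

text \<open>Both groups are of dihedral type with the same \<open>n\<close>, so the formula applies to each.\<close>

theorem mainTheorem13:
  fixes Q :: "('a, 'b) monoid_scheme" and D :: "('c, 'd) monoid_scheme"
    and n m :: nat and a b :: 'a and c d :: 'c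
  assumes "n \<ge> 1" and "m \<ge> 1"
    and "group Q" and "a \<in> carrier Q" and "b \<in> carrier Q"
    and "carrier Q = generate Q {a, b}"
    and "a [^]\<^bsub>Q\<^esub> n = b [^]\<^bsub>Q\<^esub> (2::nat)"
    and "b [^]\<^bsub>Q\<^esub> (2::nat) = (a \<otimes>\<^bsub>Q\<^esub> b) [^]\<^bsub>Q\<^esub> (2::nat)"
    and "card (carrier Q) = 4 * n"
    and "group D" and "c \<in> carrier D" and "d \<in> carrier D"
    and "carrier D = generate D {c, d}"
    and "c [^]\<^bsub>D\<^esub> n = \<one>\<^bsub>D\<^esub>"
    and "d [^]\<^bsub>D\<^esub> (2::nat) = \<one>\<^bsub>D\<^esub>"
    and "inv\<^bsub>D\<^esub> d \<otimes>\<^bsub>D\<^esub> c \<otimes>\<^bsub>D\<^esub> d = inv\<^bsub>D\<^esub> c"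
    and "card (carrier D) = 2 * n"
  shows "ext_degree m Q =
           (if even m then (3 * real n + real (gcd m n)) / (4 * real n)
            else (real n + real (gcd m n) + 2) / (4 * real n))
         \<and> ext_degree m Q = ext_degree m D"
proof -
  interpret quaternion: dihedral_type Q a b "2 * n" n
    using assms by (intro generalized_quaternion_is_dihedral_type) auto
  interpret dihedral: dihedral_type D c d n n
    using assms by (intro dihedral_is_dihedral_type) auto
  show ?thesis
    using quaternion.ext_degree_formula[of m] dihedral.ext_degree_formula[of m] by simp
qed

end
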